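(* Let $\beta\in(0,1)$, $x^1\ge0$, $C:\mathbb{R}_+\to\mathbb{R}_+$ increasing, strictly convex and continuously differentiable with $c=C'$, $\lim_{x\to\infty}c(x)=\infty$. Let $\mathbb{P}$ be a probability distribution with nonnegative support, finite mean, and no atoms, and $\boldsymbol{p},\boldsymbol{p}^1,\boldsymbol{p}^2,\ldots$ i.i.d. with law $\mathbb{P}$. Fix samples $p_1,\ldots,p_N$ and define $y_{\mathrm{S}},y_{\mathrm{M}},\bar V_{\mathrm{S}},\bar V_{\mathrm{M}},p^\star_{\mathrm{S}},p^\star_{\mathrm{M}}$ as in the context. Then $$\frac{d\bar V_{\mathrm{S}}(x)}{dx}=\frac{\mathbb{E}_{\mathbb{P}}[\boldsymbol{p}\mathbb{1}\{\boldsymbol{p}>p^\star_{\mathrm{S}}(x)\}]-\mathbb{E}_{\mathbb{P}}[\mathbb{1}\{\boldsymbol{p}\le p^\star_{\mathrm{S}}(x)\}]c(x)}{1-\beta\mathbb{E}_{\mathbb{P}}[\mathbb{1}\{\boldsymbol{p}\le p^\star_{\mathrm{S}}(x)\}]}$$ and $$\frac{d\bar V_{\mathrm{M}}(x)}{dx}=\frac{\mathbb{E}_{\mathbb{P}}[\boldsymbol{p}\mathbb{1}\{\boldsymbol{p}>p^\star_{\mathrm{M}}(x)\}]-\mathbb{E}_{\mathbb{P}}[\mathbb{1}\{\boldsymbol{p}\le p^\star_{\mathrm{M}}(x)\}]c(x)}{1-\beta\mathbb{E}_{\mathbb{P}}[\mathbb{1}\{\boldsymbol{p}\le p^\star_{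\mathrm{M}}(x)\}]}.$$
   Context: $c^{-1}$ is the inverse of $c$ on its range, $(z)_{[a,b]}$ the projection onto $[a,b]$, $(z)_+=\max\{z,0\}$, $\mathbb{1}$ the event indicator, $\mu_N=\frac1N\sum_i p_i$. $y_{\mathrm{S}}(x,p)=c^{-1}((\beta\frac1N\sum_{i=1}^N(p_i-p)_+-(1-\beta)p)_{[c(0),c(x)]})$, $y_{\mathrm{M}}(x,p)=c^{-1}((\beta(\mu_N-p)_+-(1-\beta)p)_{[c(0),c(x)]})$. For a policy $y$, $y(\infty,p)=\lim_{x\to\infty}y(x,p)$, and $p^\star(x)$ is the highest price $p$ solving $y(\infty,p)=x$ ($p^\star_{\mathrm{S}},p^\star_{\mathrm{M}}$ for $y_{\mathrm{S}},y_{\mathrm{M}}$). $\bar V_y(x)=\mathbb{E}_{\mathbb{P}^\infty}[\sum_{t=1}^\infty\beta^{t-1}(\boldsymbol{p}^t(x^t-x^{t+1})-C(x^{t+1}))]$ with $x^1=x$, $x^{t+1}=y(x^t,\boldsymbol{p}^t)$; $\bar V_{\mathrm{S}}=\bar V_{y_{\mathrm{S}}}$, $\bar V_{\mathrm{M}}=\bar V_{y_{\mathrm{M}}}$, on $x\in[0,x^1]$. *)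

theory Defs
  imports "HOL-Probability.Probability"
begin

definition strict_convex_on :: "real set \<Rightarrow> (real \<Rightarrow> real) \<Rightarrow> bool" where
  "strict_convex_on S f \<longleftrightarrow> (\<forall>x\<in>S. \<forall>y\<in>S. \<forall>t. x \<noteq> y \<and> 0 < t \<and> t < 1 \<longrightarrow>
      f ((1 - t) * x + t * y) < (1 - t) * f x + t * f y)"

definition proj :: "real \<Rightarrow> real \<Rightarrow> real \<Rightarrow> real" where
  "proj a b z = max a (min b z)"

definition cinv :: "(real \<Rightarrow> real) \<Rightarrow> real \<Rightarrow> real" where
  "cinv c z = inv_into {0..} c z"

definition yS :: "(real \<Rightarrow> real) \<Rightarrow> real \<Rightarrow> nat \<Rightarrow> (nat \<Rightarrow> real) \<Rightarrow> real \<Rightarrow> real \<Rightarrow> real" where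
  "yS c \<beta> N ps x p = cinv c (proj (c 0) (c x)
      (\<beta> * ((1 / real N) * (\<Sum>i=1..N. max (ps i - p) 0)) - (1 - \<beta>) * p))"

definition muN :: "nat \<Rightarrow> (nat \<Rightarrow> real) \<Rightarrow> real" where
  "muN N ps = (1 / real N) * (\<Sum>i=1..N. ps i)"

definition yM :: "(real \<Rightarrow> real) \<Rightarrow> real \<Rightarrow> nat \<Rightarrow> (nat \<Rightarrow> real) \<Rightarrow> real \<Rightarrow> real \<Rightarrow> real" where
  "yM c \<beta> N ps x p = cinv c (proj (c 0) (c x)
      (\<beta> * max (muN N ps - p) 0 - (1 - \<beta>) * p))"

definition y_inf :: "(real \<Rightarrow> real \<Rightarrow> real) \<Rightarrow> real \<Rightarrow> real" where
  "y_inf y p = Lim at_top (\<lambda>x. y x p)"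

definition pstar :: "(real \<Rightarrow> real \<Rightarrow> real) \<Rightarrow> real \<Rightarrow> real" where
  "pstar y x = (GREATEST p. y_inf y p = x)"

text \<open>Inventory trajectory: traj 0 = x^1 (= x), traj (t+1) = y(traj t, price at period t).
  Periods are indexed from 0 here (period t+1 of the paper).\<close>
primrec traj :: "(real \<Rightarrow> real \<Rightarrow> real) \<Rightarrow> real \<Rightarrow> (nat \<Rightarrow> real) \<Rightarrow> nat \<Rightarrow> real" where
  "traj y x \<omega> 0 = x"
| "traj y x \<omega> (Suc t) = y (traj y x \<omega> t) (\<omega> t)"

definition Vbar :: "(real \<Rightarrow> real \<Rightarrow> real) \<Rightarrow> real measure \<Rightarrow> (real \<Rightarrow> real) \<Rightarrow> real \<Rightarrow> real \<Rightarrow> real" where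
  "Vbar y M C \<beta> x = (\<integral>\<omega>. (\<Sum>t. \<beta> ^ t * (\<omega> t * (traj y x \<omega> t - traj y x \<omega> (Suc t))
        - C (traj y x \<omega> (Suc t)))) \<partial>(PiM (UNIV :: nat set) (\<lambda>_. M)))"

end

theory Submission
  imports Defs
begin

text \<open>Both policies have the form y(x, p) = min x (Y p) with Y p = c^-1(max (c 0) (g p)) for a
  continuous, strictly decreasing, surjective g, so the stock x is held at price p exactly when
  p < p*(x). Along a fixed price path the trajectory started near x stays put until the first
  period whose target Y(p_t) falls below x; since the price law has no atoms, almost surely no
  target equals x, so near x every trajectory is either the identity or constant. The reward of
  period t then has derivative beta^t 1{p_s < p* for s < t} (p_t 1{p_t > p*} - c x 1{p_t <= p*}),
  whose expectation is (beta q)^t K by independence, where q = P(p <= p*) and K is the numerator of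
  the claimed formula. Lipschitz bounds in x dominate the difference quotients and the series, so
  the derivative of the value is the geometric sum K / (1 - beta q).\<close>

lemma strict_convex_on_imp_convex_on:
  assumes "strict_convex_on S f" and "convex S"
  shows "convex_on S f"
proof (rule convex_onI)
  fix t x y :: real assume "0 < t" "t < 1" "x \<in> S" "y \<in> S"
  then show "f ((1 - t) *\<^sub>R x + t *\<^sub>R y) \<le> (1 - t) * f x + t * f y"
    using assms(1) unfolding strict_convex_on_def
    by (cases "x = y") (force simp: algebra_simps)+
qed (rule \<open>convex S\<close>)

lemma strict_convex_on_derivative_less:
  assumes sc: "strict_convex_on {0..} C"
    and C_deriv: "\<forall>x\<ge>0. (C has_real_derivative c x) (at x within {0..})"
    and "0 < a" "a < b"
  shows "c a < c b"
proof -
  have convex: "convex_on {0..} C"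
    using sc by (rule strict_convex_on_imp_convex_on) (simp add: convex_real_interval)
  have tangent: "c u * (z - u) \<le> C z - C u" if "0 < u" "0 \<le> z" for u z
    using convex_on_imp_above_tangent[OF convex, of u z "c u"] that C_deriv by auto
  define m where "m = (a + b) / 2"
  have "C ((1 - 1/2) * a + 1/2 * b) < (1 - 1/2) * C a + 1/2 * C b"
    using sc[unfolded strict_convex_on_def, rule_format, of a b "1/2"] \<open>0 < a\<close> \<open>a < b\<close>
    by simp
  then have "C m < (C a + C b) / 2"
    by (simp add: m_def field_simps)
  moreover have "c a * (m - a) \<le> C m - C a" and "c b * (a - b) \<le> C a - C b"
    using tangent[of a m] tangent[of b a] \<open>0 < a\<close> \<open>a < b\<close> by (simp_all add: m_def)
  ultimately have "c a * (b - a) < c b * (b - a)"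
    by (simp add: m_def field_simps)
  then show ?thesis
    using \<open>a < b\<close> by simp
qed

text \<open>At the boundary point 0 the tangent argument is unavailable; continuity of c closes the gap.\<close>

lemma strict_convex_on_derivative_strict_mono:
  assumes sc: "strict_convex_on {0..} C"
    and C_deriv: "\<forall>x\<ge>0. (C has_real_derivative c x) (at x within {0..})"
    and c_cont: "continuous_on {0..} c"
    and "0 \<le> a" "a < b"
  shows "c a < c b"
proof (cases "a = 0")
  case False
  then show ?thesis
    using strict_convex_on_derivative_less[OF sc C_deriv] assms(4,5) by simp
next
  case True
  have "(c \<longlongrightarrow> c 0) (at_right 0)"
    using c_cont unfolding continuous_on_def
    by (auto intro: tendsto_within_subset)
  moreover have "eventually (\<lambda>t. c t \<le> c (b/2)) (at_right 0)"
  proof -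
    have "0 < b/2"
      using True assms(5) by simp
    from eventually_at_right_real[OF this] show ?thesis
      by eventually_elim (auto intro!: less_imp_le strict_convex_on_derivative_less[OF sc C_deriv])
  qed
  ultimately have "c 0 \<le> c (b/2)"
    by (rule tendsto_upperbound) simp
  also have "c (b/2) < c b"
    using strict_convex_on_derivative_less[OF sc C_deriv, of "b/2" b] True assms(5) by simp
  finally show ?thesis
    using True by simp
qed

lemma has_real_derivative_integral:
  fixes f :: "real \<Rightarrow> 'a \<Rightarrow> real" and N :: "'a measure"
  assumes "0 < \<delta>"
    and integrable: "\<And>x. x \<in> ball x0 \<delta> \<Longrightarrow> integrable N (f x)"
    and G: "integrable N G"
    and lipschitz: "\<And>x. x \<in> ball x0 \<delta> \<Longrightarrow> AE \<omega> in N. \<bar>f x \<omega> - f x0 \<omega>\<bar> \<le> G \<omega> * \<bar>x - x0\<bar>"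
    and deriv: "AE \<omega> in N. ((\<lambda>x. f x \<omega>) has_real_derivative f' \<omega>) (at x0)"
    and f'_measurable: "f' \<in> borel_measurable N"
  shows "((\<lambda>x. \<integral>\<omega>. f x \<omega> \<partial>N) has_real_derivative (\<integral>\<omega>. f' \<omega> \<partial>N)) (at x0)"
proof -
  have x0: "x0 \<in> ball x0 \<delta>"
    using \<open>0 < \<delta>\<close> by simp
  have "((\<lambda>x. ((\<integral>\<omega>. f x \<omega> \<partial>N) - (\<integral>\<omega>. f x0 \<omega> \<partial>N)) / (x - x0)) \<longlongrightarrow> (\<integral>\<omega>. f' \<omega> \<partial>N))
      (at x0 within ball x0 \<delta>)"
    unfolding tendsto_at_iff_sequentially comp_def
  proof (intro allI impI)
    fix X :: "nat \<Rightarrow> real" assume X: "\<forall>i. X i \<in> ball x0 \<delta> - {x0}" and "X \<longlonglongrightarrow> x0"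
    define s where "s i \<omega> = (f (X i) \<omega> - f x0 \<omega>) / (X i - x0)" for i \<omega>
    have "(\<lambda>i. \<integral>\<omega>. s i \<omega> \<partial>N) \<longlonglongrightarrow> (\<integral>\<omega>. f' \<omega> \<partial>N)"
    proof (rule integral_dominated_convergence[where w=G])
      show "s i \<in> borel_measurable N" for i
        unfolding s_def using X integrable[OF x0] integrable[of "X i"]
        by (intro borel_measurable_divide borel_measurable_diff) auto
      show "AE \<omega> in N. (\<lambda>i. s i \<omega>) \<longlonglongrightarrow> f' \<omega>"
        using deriv
      proof eventually_elim
        case (elim \<omega>)
        then have "((\<lambda>x. (f x \<omega> - f x0 \<omega>) / (x - x0)) \<longlongrightarrow> f' \<omega>) (at x0)"
          by (simp add: has_field_derivative_iff)
        then show ?case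
          using X \<open>X \<longlonglongrightarrow> x0\<close> unfolding s_def tendsto_at_iff_sequentially comp_def
          by auto
      qed
      show "AE \<omega> in N. norm (s i \<omega>) \<le> G \<omega>" for i
        using lipschitz[of "X i"] X
        by (auto elim!: eventually_mono simp: s_def abs_divide pos_divide_le_eq)
    qed (use f'_measurable G in auto)
    moreover have "(\<integral>\<omega>. s i \<omega> \<partial>N) = ((\<integral>\<omega>. f (X i) \<omega> \<partial>N) - (\<integral>\<omega>. f x0 \<omega> \<partial>N)) / (X i - x0)" for i
      unfolding s_def using X integrable[OF x0] integrable[of "X i"] by simp
    ultimately show "(\<lambda>i. ((\<integral>\<omega>. f (X i) \<omega> \<partial>N) - (\<integral>\<omega>. f x0 \<omega> \<partial>N)) / (X i - x0))
        \<longlonglongrightarrow> (\<integral>\<omega>. f' \<omega> \<partial>N)"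
      by simp
  qed
  moreover have "at x0 within ball x0 \<delta> = at x0"
    by (rule at_within_open) (simp_all add: \<open>0 < \<delta>\<close>)
  ultimately show ?thesis
    by (simp add: has_field_derivative_iff)
qed

context prob_space
begin

lemma distr_PiM_UNIV_component: "distr (PiM UNIV (\<lambda>_. M)) M (\<lambda>\<omega>. \<omega> t) = M"
  by (rule distr_PiM_component[of UNIV "\<lambda>_. M" t]) (simp_all add: prob_space_axioms)

lemma integral_PiM_component:
  fixes f :: "'a \<Rightarrow> real"
  assumes "f \<in> borel_measurable M"
  shows "(\<integral>\<omega>. f (\<omega> t) \<partial>PiM UNIV (\<lambda>_. M)) = (\<integral>p. f p \<partial>M)"
  using integral_distr[of "\<lambda>\<omega>. \<omega> t" "PiM UNIV (\<lambda>_. M)" M f] assms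
  by (simp add: distr_PiM_UNIV_component)

lemma integrable_PiM_component:
  fixes f :: "'a \<Rightarrow> real"
  assumes "integrable M f"
  shows "integrable (PiM UNIV (\<lambda>_. M)) (\<lambda>\<omega>. f (\<omega> t))"
  using integrable_distr_eq[of "\<lambda>\<omega>. \<omega> t" "PiM UNIV (\<lambda>_. M)" M f] assms
  by (simp add: distr_PiM_UNIV_component)

lemma integral_PiM_prod_components:
  fixes F :: "nat \<Rightarrow> 'a \<Rightarrow> real"
  assumes "finite I" and integrable: "\<And>s. s \<in> I \<Longrightarrow> integrable M (F s)"
  shows "(\<integral>\<omega>. (\<Prod>s\<in>I. F s (\<omega> s)) \<partial>PiM UNIV (\<lambda>_. M)) = (\<Prod>s\<in>I. \<integral>p. F s p \<partial>M)"
proof -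
  interpret P: prob_space "PiM UNIV (\<lambda>_::nat. M)"
    by (rule prob_space_PiM) (rule prob_space_axioms)
  have components: "(\<lambda>\<omega>. \<omega> s) \<in> measurable (PiM UNIV (\<lambda>_. M)) M" for s :: nat
    by (rule measurable_component_singleton) simp
  have "P.indep_vars (\<lambda>_. M) (\<lambda>s \<omega>. \<omega> s) UNIV"
    by (subst P.indep_vars_iff_distr_eq_PiM)
      (simp_all add: components distr_PiM_UNIV_component restrict_UNIV)
  then have "P.indep_vars (\<lambda>_. borel) (\<lambda>s \<omega>. F s (\<omega> s)) I"
    by (rule P.indep_vars_compose2[OF P.indep_vars_subset]) (use integrable in auto)
  then have "(\<integral>\<omega>. (\<Prod>s\<in>I. F s (\<omega> s)) \<partial>PiM UNIV (\<lambda>_. M)) = (\<Prod>s\<in>I. \<integral>\<omega>. F s (\<omega> s) \<partial>PiM UNIV (\<lambda>_. M))"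
    by (rule P.indep_vars_lebesgue_integral[OF \<open>finite I\<close>])
      (rule integrable_PiM_component[OF integrable])
  also have "\<dots> = (\<Prod>s\<in>I. \<integral>p. F s p \<partial>M)"
    by (intro prod.cong refl integral_PiM_component) (use integrable in auto)
  finally show ?thesis .
qed

end

text \<open>g is the expression in the price that y_S and y_M clip to [c 0, c x], and target p is the
  limit y(\<infinity>, p) of the resulting policy.\<close>

locale threshold_policy =
  fixes C c :: "real \<Rightarrow> real" and M :: "real measure" and \<beta> :: real and g :: "real \<Rightarrow> real"
  assumes beta: "0 < \<beta>" "\<beta> < 1"
    and C_mono: "mono_on {0..} C"
    and C_deriv: "\<forall>x\<ge>0. (C has_real_derivative c x) (at x within {0..})"
    and c_strict_mono: "\<And>a b. 0 \<le> a \<Longrightarrow> a < b \<Longrightarrow> c a < c b"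
    and c_cont: "continuous_on {0..} c"
    and c_lim: "filterlim c at_top at_top"
    and M_prob: "prob_space M"
    and M_borel: "sets M = sets borel"
    and M_mean: "integrable M (\<lambda>p. p)"
    and M_no_atoms: "\<forall>a. measure M {a} = 0"
    and g_cont: "continuous_on UNIV g"
    and g_strict_antimono: "\<And>a b. a < b \<Longrightarrow> g b < g a"
    and g_unbounded_below: "\<And>z. \<exists>p. g p \<le> z"
    and g_unbounded_above: "\<And>z. \<exists>p. z \<le> g p"
begin

definition policy :: "real \<Rightarrow> real \<Rightarrow> real" where
  "policy x p = cinv c (proj (c 0) (c x) (g p))"

definition target :: "real \<Rightarrow> real" where
  "target p = cinv c (max (c 0) (g p))"

definition critical_price :: "real \<Rightarrow> real" where
  "critical_price x = (THE p. g p = c x)"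

lemma c_le_iff: "0 \<le> a \<Longrightarrow> 0 \<le> b \<Longrightarrow> c a \<le> c b \<longleftrightarrow> a \<le> b"
  using c_strict_mono[of a b] c_strict_mono[of b a] by (cases a b rule: linorder_cases) auto

lemma c_mono: "0 \<le> a \<Longrightarrow> a \<le> b \<Longrightarrow> c a \<le> c b"
  using c_le_iff[of a b] by simp

lemma inj_on_c: "inj_on c {0..}"
proof (rule inj_onI)
  fix a b assume "a \<in> {0..}" "b \<in> {0..}" "c a = c b"
  then show "a = b"
    using c_le_iff[of a b] c_le_iff[of b a] by simp
qed

lemma in_image_c:
  assumes "c 0 \<le> z"
  shows "z \<in> c ` {0..}"
proof -
  have "eventually (\<lambda>x. z \<le> c x) at_top"
    using c_lim by (simp add: filterlim_at_top)
  then have "eventually (\<lambda>x. z \<le> c x \<and> 0 \<le> x) at_top"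
    using eventually_ge_at_top[of 0] by (rule eventually_conj)
  then obtain b where b: "z \<le> c b" "0 \<le> b"
    using eventually_happens'[OF trivial_limit_at_top_linorder] by blast
  have "continuous_on {0..b} c"
    using c_cont by (rule continuous_on_subset) auto
  then obtain u where "0 \<le> u" "u \<le> b" "c u = z"
    using IVT'[of c 0 z b] assms b by auto
  then show ?thesis
    by auto
qed

lemma cinv_c [simp]: "0 \<le> u \<Longrightarrow> cinv c (c u) = u"
  unfolding cinv_def using inj_on_c by simp

lemma c_cinv [simp]: "c 0 \<le> z \<Longrightarrow> c (cinv c z) = z"
  unfolding cinv_def using in_image_c by (simp add: f_inv_into_f)

lemma cinv_nonneg: "c 0 \<le> z \<Longrightarrow> 0 \<le> cinv c z"
  unfolding cinv_def using inv_into_into[OF in_image_c] by simp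

lemma cinv_le_iff: "c 0 \<le> z \<Longrightarrow> 0 \<le> u \<Longrightarrow> cinv c z \<le> u \<longleftrightarrow> z \<le> c u"
  using c_le_iff[OF cinv_nonneg, of z u] by simp

lemma target_nonneg: "0 \<le> target p"
  unfolding target_def by (rule cinv_nonneg) simp

lemma target_antimono:
  assumes "a \<le> b"
  shows "target b \<le> target a"
proof -
  have "g b \<le> g a"
    using g_strict_antimono[of a b] assms by (cases "a = b") auto
  then have "max (c 0) (g b) \<le> c (target a)"
    unfolding target_def by simp
  then show ?thesis
    unfolding target_def[of b] by (simp add: cinv_le_iff target_nonneg)
qed

lemma policy_eq_min:
  assumes "0 \<le> x"
  shows "policy x p = min x (target p)"
proof (cases "g p \<le> c x")
  case True
  then have "target p \<le> x"
    using assms c_mono[of 0 x] unfolding target_def by (simp add: cinv_le_iff)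
  moreover have "proj (c 0) (c x) (g p) = max (c 0) (g p)"
    using True c_mono[of 0 x] assms by (simp add: proj_def)
  ultimately show ?thesis
    by (simp add: policy_def target_def)
next
  case False
  then have "x \<le> target p"
    using assms cinv_le_iff[of "max (c 0) (g p)" x] c_mono[of 0 x] unfolding target_def by auto
  moreover have "proj (c 0) (c x) (g p) = c x"
    using False c_mono[of 0 x] assms by (simp add: proj_def)
  ultimately show ?thesis
    using assms by (simp add: policy_def min_def)
qed

lemma y_inf_policy: "y_inf policy p = target p"
proof -
  have "eventually (\<lambda>x. max (c 0) (g p) \<le> c x) at_top"
    using c_lim unfolding filterlim_at_top by blast
  then have "eventually (\<lambda>x. max (c 0) (g p) \<le> c x \<and> 0 \<le> x) at_top"
    using eventually_ge_at_top[of 0] by (rule eventually_conj)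
  then have "eventually (\<lambda>x. policy x p = target p) at_top"
  proof eventually_elim
    case (elim x)
    then have "target p \<le> x"
      unfolding target_def by (simp add: cinv_le_iff)
    then show ?case
      using elim by (simp add: policy_eq_min)
  qed
  then show ?thesis
    unfolding y_inf_def by (intro tendsto_Lim tendsto_eventually) simp_all
qed

lemma g_less_iff: "g a < g b \<longleftrightarrow> b < a"
  using g_strict_antimono[of a b] g_strict_antimono[of b a]
  by (cases a b rule: linorder_cases) auto

lemma g_eq_iff: "g a = g b \<longleftrightarrow> a = b"
  using g_less_iff[of a b] g_less_iff[of b a] by (cases a b rule: linorder_cases) auto

lemma g_critical_price: "g (critical_price x) = c x"
proof -
  obtain p1 p2 where p1: "g p1 \<le> c x" and p2: "c x \<le> g p2"
    using g_unbounded_below g_unbounded_above by blast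
  then have "p2 \<le> p1"
    using g_less_iff[of p2 p1] by force
  moreover have "continuous_on {p2..p1} g"
    using g_cont by (rule continuous_on_subset) simp
  ultimately obtain p where "g p = c x"
    using IVT2'[of g p1 "c x" p2] p1 p2 by blast
  then have "(THE p. g p = c x) = p"
    by (rule the_equality) (metis \<open>g p = c x\<close> g_eq_iff)
  then show ?thesis
    using \<open>g p = c x\<close> by (simp add: critical_price_def)
qed

lemma target_eq_iff:
  assumes "0 < x"
  shows "target p = x \<longleftrightarrow> p = critical_price x"
proof -
  have "target p = x \<longleftrightarrow> max (c 0) (g p) = c x"
    using assms c_cinv[of "max (c 0) (g p)"] unfolding target_def
    by (metis cinv_c max.cobounded1 less_imp_le)
  also have "\<dots> \<longleftrightarrow> g p = g (critical_price x)"
    using c_strict_mono[of 0 x] assms g_critical_price[of x] by (auto simp: max_def)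
  finally show ?thesis
    by (simp add: g_eq_iff)
qed

lemma less_target_iff:
  assumes "0 < x"
  shows "x < target p \<longleftrightarrow> p < critical_price x"
proof -
  have "x < target p \<longleftrightarrow> c x < g p"
    using assms c_strict_mono[of 0 x] cinv_le_iff[of "max (c 0) (g p)" x] unfolding target_def by auto
  also have "\<dots> \<longleftrightarrow> p < critical_price x"
    using g_less_iff[of "critical_price x" p] by (simp add: g_critical_price)
  finally show ?thesis .
qed

lemma pstar_policy: "0 < x \<Longrightarrow> pstar policy x = critical_price x"
  unfolding pstar_def y_inf_policy by (rule Greatest_equality) (simp_all add: target_eq_iff)

lemma traj_policy_bounds: "0 \<le> x \<Longrightarrow> 0 \<le> traj policy x \<omega> t \<and> traj policy x \<omega> t \<le> x"
  by (induction t) (auto simp: policy_eq_min target_nonneg)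

lemma traj_policy_Suc:
  "0 \<le> x \<Longrightarrow> traj policy x \<omega> (Suc t) = min (traj policy x \<omega> t) (target (\<omega> t))"
  using traj_policy_bounds[of x \<omega> t] by (simp add: policy_eq_min)

lemma traj_policy_dist:
  "0 \<le> x \<Longrightarrow> 0 \<le> x' \<Longrightarrow> \<bar>traj policy x \<omega> t - traj policy x' \<omega> t\<bar> \<le> \<bar>x - x'\<bar>"
proof (induction t)
  case (Suc t)
  then show ?case
    by (simp del: traj.simps(2) add: traj_policy_Suc min_def) linarith
qed simp

definition kept :: "real \<Rightarrow> nat \<Rightarrow> (nat \<Rightarrow> real) \<Rightarrow> bool" where
  "kept x0 t \<omega> \<longleftrightarrow> (\<forall>s<t. x0 < target (\<omega> s))"

lemma kept_0 [simp]: "kept x0 0 \<omega>"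
  by (simp add: kept_def)

lemma kept_Suc: "kept x0 (Suc t) \<omega> \<longleftrightarrow> kept x0 t \<omega> \<and> x0 < target (\<omega> t)"
  unfolding kept_def using less_Suc_eq by auto

lemma traj_policy_kept: "0 \<le> x0 \<Longrightarrow> kept x0 t \<omega> \<Longrightarrow> traj policy x0 \<omega> t = x0"
  by (induction t) (simp_all del: traj.simps(2) add: traj_policy_Suc kept_Suc min_def)

text \<open>Without ties target (\<omega> s) = x0, the first sale from a start near x0 happens in the same
  period as from x0 and leaves the same stock, whatever the start.\<close>

lemma eventually_traj_policy:
  assumes "0 < x0" and no_tie: "\<forall>s<t. target (\<omega> s) \<noteq> x0"
  shows "eventually (\<lambda>x. traj policy x \<omega> t = (if kept x0 t \<omega> then x else traj policy x0 \<omega> t)) (nhds x0)"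
  using no_tie
proof (induction t)
  case (Suc t)
  have IH: "eventually (\<lambda>x. traj policy x \<omega> t = (if kept x0 t \<omega> then x else traj policy x0 \<omega> t))
      (nhds x0)"
    using Suc by auto
  have pos: "eventually (\<lambda>x. 0 < x) (nhds x0)"
    using eventually_nhds_in_open[of "{0<..}" x0] \<open>0 < x0\<close> by simp
  consider "x0 < target (\<omega> t)" | "target (\<omega> t) < x0"
    using Suc.prems by fastforce
  then show ?case
  proof cases
    case 1
    have "eventually (\<lambda>x. x < target (\<omega> t)) (nhds x0)"
      using eventually_nhds_in_open[of "{..<target (\<omega> t)}" x0] 1 by simp
    with IH pos show ?thesis
      by eventually_elim (use 1 \<open>0 < x0\<close> traj_policy_bounds[of x0 \<omega> t] in
          \<open>auto simp del: traj.simps(2) simp: traj_policy_Suc kept_Suc min_def\<close>)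
  next
    case 2
    have "eventually (\<lambda>x. target (\<omega> t) < x) (nhds x0)"
      using eventually_nhds_in_open[of "{target (\<omega> t)<..}" x0] 2 by simp
    with IH pos show ?thesis
      by eventually_elim (use 2 \<open>0 < x0\<close> traj_policy_kept[of x0 t \<omega>] in
          \<open>auto simp del: traj.simps(2) simp: traj_policy_Suc kept_Suc min_def\<close>)
  qed
qed simp

definition reward :: "nat \<Rightarrow> real \<Rightarrow> (nat \<Rightarrow> real) \<Rightarrow> real" where
  "reward t x \<omega> = \<beta> ^ t * (\<omega> t * (traj policy x \<omega> t - traj policy x \<omega> (Suc t))
      - C (traj policy x \<omega> (Suc t)))"

definition marginal_payoff :: "real \<Rightarrow> real \<Rightarrow> real" where
  "marginal_payoff x0 p = (if x0 < target p then - c x0 else p)"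

definition reward_deriv :: "nat \<Rightarrow> real \<Rightarrow> (nat \<Rightarrow> real) \<Rightarrow> real" where
  "reward_deriv t x0 \<omega> = \<beta> ^ t * (of_bool (kept x0 t \<omega>) * marginal_payoff x0 (\<omega> t))"

lemma C_has_real_derivative:
  assumes "0 < x"
  shows "(C has_real_derivative c x) (at x)"
proof -
  have "(C has_real_derivative c x) (at x within {0..})"
    using C_deriv assms by simp
  moreover have "at x within {0..} = at x"
    using assms by (intro at_within_interior) simp
  ultimately show ?thesis
    by simp
qed

lemma has_real_derivative_reward:
  assumes "0 < x0" and no_tie: "\<forall>s\<le>t. target (\<omega> s) \<noteq> x0"
  shows "((\<lambda>x. reward t x \<omega>) has_real_derivative reward_deriv t x0 \<omega>) (at x0)"
proof -
  define L where "L s x = (if kept x0 s \<omega> then x else traj policy x0 \<omega> s)" for s x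
  define k :: "nat \<Rightarrow> real" where "k s = of_bool (kept x0 s \<omega>)" for s
  have L: "(L s has_real_derivative k s) (at x0)" for s
    by (cases "kept x0 s \<omega>") (auto simp: L_def[abs_def] k_def intro!: derivative_eq_intros)
  have C_L: "((\<lambda>x. C (L (Suc t) x)) has_real_derivative c x0 * k (Suc t)) (at x0)"
    using C_has_real_derivative[OF \<open>0 < x0\<close>] by (cases "kept x0 (Suc t) \<omega>") (simp_all add: L_def k_def)
  have "eventually (\<lambda>x. traj policy x \<omega> s = L s x) (nhds x0)" if "s \<le> Suc t" for s
    unfolding L_def using eventually_traj_policy[OF \<open>0 < x0\<close>, of s] no_tie that by auto
  then have "eventually (\<lambda>x. traj policy x \<omega> t = L t x \<and> traj policy x \<omega> (Suc t) = L (Suc t) x) (nhds x0)"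
    by (simp del: traj.simps(2) add: eventually_conj_iff)
  then have "eventually (\<lambda>x. reward t x \<omega> = \<beta> ^ t * (\<omega> t * (L t x - L (Suc t) x) - C (L (Suc t) x)))
      (nhds x0)"
    by eventually_elim (simp del: traj.simps(2) add: reward_def)
  moreover have "((\<lambda>x. \<beta> ^ t * (\<omega> t * (L t x - L (Suc t) x) - C (L (Suc t) x))) has_real_derivative
      \<beta> ^ t * (\<omega> t * (k t - k (Suc t)) - c x0 * k (Suc t))) (at x0)"
    by (intro DERIV_cmult DERIV_diff L C_L)
  moreover have "\<omega> t * (k t - k (Suc t)) - c x0 * k (Suc t) = k t * marginal_payoff x0 (\<omega> t)"
    by (simp add: k_def kept_Suc marginal_payoff_def)
  ultimately show ?thesis
    by (simp add: DERIV_cong_ev reward_deriv_def k_def)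
qed

lemma abs_C_diff_le:
  assumes "0 \<le> u" "u \<le> B" "0 \<le> v" "v \<le> B"
  shows "\<bar>C u - C v\<bar> \<le> (\<bar>c 0\<bar> + \<bar>c B\<bar>) * \<bar>u - v\<bar>"
proof -
  have "norm (C u - C v) \<le> (\<bar>c 0\<bar> + \<bar>c B\<bar>) * norm (u - v)"
  proof (rule field_differentiable_bound[of "{0..B}"])
    fix z assume z: "z \<in> {0..B}"
    then show "(C has_field_derivative c z) (at z within {0..B})"
      using C_deriv has_field_derivative_subset[of C "c z" z "{0..}" "{0..B}"] by auto
    have "c 0 \<le> c z" "c z \<le> c B"
      using z c_mono by auto
    then show "norm (c z) \<le> \<bar>c 0\<bar> + \<bar>c B\<bar>"
      by auto
  qed (use assms in auto)
  then show ?thesis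
    by simp
qed

lemma abs_reward_diff_le:
  assumes "0 \<le> x" "x \<le> B" "0 \<le> x'" "x' \<le> B"
  shows "\<bar>reward t x \<omega> - reward t x' \<omega>\<bar> \<le> \<beta> ^ t * (2 * \<bar>\<omega> t\<bar> + (\<bar>c 0\<bar> + \<bar>c B\<bar>)) * \<bar>x - x'\<bar>"
proof -
  let ?a = "traj policy x \<omega> t" and ?b = "traj policy x \<omega> (Suc t)"
  let ?a' = "traj policy x' \<omega> t" and ?b' = "traj policy x' \<omega> (Suc t)"
  have "\<bar>?a - ?a'\<bar> \<le> \<bar>x - x'\<bar>" "\<bar>?b - ?b'\<bar> \<le> \<bar>x - x'\<bar>"
    using traj_policy_dist[of x x' \<omega> t] traj_policy_dist[of x x' \<omega> "Suc t"] assms by auto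
  then have "\<bar>(?a - ?b) - (?a' - ?b')\<bar> \<le> 2 * \<bar>x - x'\<bar>"
    by (smt (verit))
  then have "\<bar>\<omega> t * (?a - ?b) - \<omega> t * (?a' - ?b')\<bar> \<le> \<bar>\<omega> t\<bar> * (2 * \<bar>x - x'\<bar>)"
    by (metis abs_ge_zero abs_mult mult_left_mono right_diff_distrib)
  moreover have "\<bar>C ?b - C ?b'\<bar> \<le> (\<bar>c 0\<bar> + \<bar>c B\<bar>) * \<bar>x - x'\<bar>"
    using abs_C_diff_le[of ?b B ?b'] traj_policy_bounds[of x \<omega> "Suc t"]
      traj_policy_bounds[of x' \<omega> "Suc t"] \<open>\<bar>?b - ?b'\<bar> \<le> \<bar>x - x'\<bar>\<close> assms
    by (smt (verit) abs_ge_zero mult_left_mono)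
  ultimately have "\<bar>(\<omega> t * (?a - ?b) - C ?b) - (\<omega> t * (?a' - ?b') - C ?b')\<bar>
      \<le> (2 * \<bar>\<omega> t\<bar> + (\<bar>c 0\<bar> + \<bar>c B\<bar>)) * \<bar>x - x'\<bar>"
    by (simp add: algebra_simps) linarith
  then show ?thesis
    using beta unfolding reward_def right_diff_distrib[symmetric] abs_mult
    by (simp add: mult.assoc mult_left_mono)
qed

lemma abs_reward_le:
  assumes "0 \<le> x"
  shows "\<bar>reward t x \<omega>\<bar> \<le> \<beta> ^ t * (\<bar>\<omega> t\<bar> * x + (\<bar>C 0\<bar> + \<bar>C x\<bar>))"
proof -
  let ?a = "traj policy x \<omega> t" and ?b = "traj policy x \<omega> (Suc t)"
  have ab: "0 \<le> ?b" "?b \<le> ?a" "?a \<le> x"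
    using traj_policy_bounds[OF assms, of \<omega>] traj_policy_Suc[OF assms, of \<omega> t] target_nonneg[of "\<omega> t"]
    by (auto simp del: traj.simps(2))
  then have "\<bar>\<omega> t * (?a - ?b)\<bar> \<le> \<bar>\<omega> t\<bar> * x"
    by (auto simp: abs_mult intro!: mult_left_mono)
  moreover have "C 0 \<le> C ?b" "C ?b \<le> C x"
    using ab assms by (auto intro!: mono_onD[OF C_mono])
  ultimately have "\<bar>\<omega> t * (?a - ?b) - C ?b\<bar> \<le> \<bar>\<omega> t\<bar> * x + (\<bar>C 0\<bar> + \<bar>C x\<bar>)"
    by linarith
  then show ?thesis
    using beta unfolding reward_def abs_mult by (simp add: mult_left_mono)
qed

end

sublocale threshold_policy \<subseteq> M: prob_space M
  by (rule M_prob)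

sublocale threshold_policy \<subseteq> P: prob_space "PiM UNIV (\<lambda>_::nat. M)"
  by (rule prob_space_PiM) (rule M_prob)

context threshold_policy
begin

abbreviation P :: "(nat \<Rightarrow> real) measure" where
  "P \<equiv> PiM UNIV (\<lambda>_. M)"

lemma space_M: "space M = UNIV"
  using sets_eq_imp_space_eq[OF M_borel] by simp

lemma measurable_M_eq_borel: "measurable M N = measurable borel N"
  by (rule measurable_cong_sets) (simp_all add: M_borel)

lemma measurable_into_M_eq_borel: "measurable N M = measurable N borel"
  by (rule measurable_cong_sets) (simp_all add: M_borel)

lemma component_measurable [measurable]: "(\<lambda>\<omega>. \<omega> t) \<in> borel_measurable P"
proof -
  have "(\<lambda>\<omega>. \<omega> t) \<in> measurable P M"
    by (rule measurable_component_singleton) simp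
  then show ?thesis
    by (simp add: measurable_into_M_eq_borel)
qed

lemma target_measurable [measurable]: "target \<in> borel_measurable borel"
proof -
  have "mono (\<lambda>p. - target p)"
    by (rule monoI) (simp add: target_antimono)
  then have "(\<lambda>p. - (- target p)) \<in> borel_measurable borel"
    by (intro borel_measurable_uminus borel_measurable_mono)
  then show ?thesis
    by simp
qed

lemma C_max_measurable [measurable]: "(\<lambda>u. C (max 0 u)) \<in> borel_measurable borel"
  by (rule borel_measurable_mono, rule monoI) (auto intro!: mono_onD[OF C_mono] simp: max_def)

lemma traj_policy_measurable [measurable]:
  "0 \<le> x \<Longrightarrow> (\<lambda>\<omega>. traj policy x \<omega> t) \<in> borel_measurable P"
proof (induction t)
  case (Suc t)
  then have "(\<lambda>\<omega>. min (traj policy x \<omega> t) (target (\<omega> t))) \<in> borel_measurable P"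
    by measurable
  then show ?case
    using traj_policy_Suc[OF Suc.prems] by (simp del: traj.simps(2))
qed simp

text \<open>Measurability of C comes only from its monotonicity, which holds on the nonnegative reals,
  where the trajectory lives; hence the detour through max 0.\<close>

lemma reward_measurable [measurable]:
  assumes "0 \<le> x"
  shows "reward t x \<in> borel_measurable P"
proof -
  have "reward t x = (\<lambda>\<omega>. \<beta> ^ t * (\<omega> t * (traj policy x \<omega> t - traj policy x \<omega> (Suc t))
      - C (max 0 (traj policy x \<omega> (Suc t)))))"
    using traj_policy_bounds[OF assms] by (auto simp del: traj.simps(2) simp: reward_def fun_eq_iff)
  also have "\<dots> \<in> borel_measurable P"
    using assms by measurable
  finally show ?thesis .
qed

lemma of_bool_kept_eq_prod: "of_bool (kept x0 t \<omega>) = (\<Prod>s<t. indicator {p. x0 < target p} (\<omega> s) :: real)"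
proof (induction t)
  case (Suc t)
  have "of_bool (kept x0 (Suc t) \<omega>) = (of_bool (kept x0 t \<omega>) * indicator {p. x0 < target p} (\<omega> t) :: real)"
    by (simp add: kept_Suc indicator_def)
  then show ?case
    by (simp add: Suc.IH)
qed simp

lemma reward_deriv_measurable [measurable]: "reward_deriv t x0 \<in> borel_measurable P"
  unfolding reward_deriv_def of_bool_kept_eq_prod marginal_payoff_def by measurable

lemma integrable_abs_price: "integrable M abs"
  using M_mean by simp

lemma integrable_reward:
  assumes "0 \<le> x"
  shows "integrable P (reward t x)"
proof (rule Bochner_Integration.integrable_bound)
  show "integrable P (\<lambda>\<omega>. \<beta> ^ t * (\<bar>\<omega> t\<bar> * x + (\<bar>C 0\<bar> + \<bar>C x\<bar>)))"
    using M.integrable_PiM_component[OF integrable_abs_price, of t] by auto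
  show "AE \<omega> in P. norm (reward t x \<omega>) \<le> norm (\<beta> ^ t * (\<bar>\<omega> t\<bar> * x + (\<bar>C 0\<bar> + \<bar>C x\<bar>)))"
    using abs_reward_le[OF assms] by (auto intro!: AE_I2 order.trans[OF _ abs_ge_self])
qed (use assms in simp)

lemma AE_summable_discounted_prices: "AE \<omega> in P. summable (\<lambda>t. \<beta> ^ t * \<bar>\<omega> t\<bar>)"
proof -
  have "(\<integral>\<^sup>+\<omega>. ennreal (\<beta> ^ t * \<bar>\<omega> t\<bar>) \<partial>P) = ennreal (\<beta> ^ t * (\<integral>p. \<bar>p\<bar> \<partial>M))" for t
  proof -
    have "(\<integral>\<^sup>+\<omega>. ennreal (\<beta> ^ t * \<bar>\<omega> t\<bar>) \<partial>P) = ennreal (\<integral>\<omega>. \<beta> ^ t * \<bar>\<omega> t\<bar> \<partial>P)"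
      using M.integrable_PiM_component[OF integrable_abs_price, of t] beta
      by (intro nn_integral_eq_integral) auto
    also have "(\<integral>\<omega>. \<beta> ^ t * \<bar>\<omega> t\<bar> \<partial>P) = \<beta> ^ t * (\<integral>p. \<bar>p\<bar> \<partial>M)"
      using M.integral_PiM_component[of abs t] by (simp add: measurable_M_eq_borel)
    finally show ?thesis .
  qed
  then have "(\<integral>\<^sup>+\<omega>. (\<Sum>t. ennreal (\<beta> ^ t * \<bar>\<omega> t\<bar>)) \<partial>P) = (\<Sum>t. ennreal (\<beta> ^ t * (\<integral>p. \<bar>p\<bar> \<partial>M)))"
    by (subst nn_integral_suminf) simp_all
  also have "\<dots> \<noteq> \<infinity>"
    using beta unfolding infinity_ennreal_def
    by (intro ennreal_suminf_neq_top summable_mult2) auto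
  finally have "AE \<omega> in P. (\<Sum>t. ennreal (\<beta> ^ t * \<bar>\<omega> t\<bar>)) \<noteq> \<infinity>"
    by (intro nn_integral_PInf_AE borel_measurable_suminf_order) simp_all
  then show ?thesis
    using beta unfolding infinity_ennreal_def
    by (auto elim!: eventually_mono intro: summable_suminf_not_top)
qed

lemma Vbar_policy_eq_suminf:
  assumes "0 \<le> x"
  shows "Vbar policy M C \<beta> x = (\<Sum>t. \<integral>\<omega>. reward t x \<omega> \<partial>P)"
    and "summable (\<lambda>t. \<integral>\<omega>. reward t x \<omega> \<partial>P)"
proof -
  define K where "K = \<bar>C 0\<bar> + \<bar>C x\<bar>"
  have AE_summable: "AE \<omega> in P. summable (\<lambda>t. norm (reward t x \<omega>))"
    using AE_summable_discounted_prices
  proof eventually_elim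
    case (elim \<omega>)
    then have "summable (\<lambda>t. (\<beta> ^ t * \<bar>\<omega> t\<bar>) * x + \<beta> ^ t * K)"
      using beta by (intro summable_add summable_mult2) auto
    then show ?case
      by (rule summable_comparison_test'[where N=0])
        (use abs_reward_le[OF assms] in \<open>simp add: K_def algebra_simps\<close>)
  qed
  have integral_norm_le: "(\<integral>\<omega>. norm (reward t x \<omega>) \<partial>P) \<le> \<beta> ^ t * ((\<integral>p. \<bar>p\<bar> \<partial>M) * x + K)" for t
  proof -
    have "(\<integral>\<omega>. norm (reward t x \<omega>) \<partial>P) \<le> (\<integral>\<omega>. \<beta> ^ t * (\<bar>\<omega> t\<bar> * x + K) \<partial>P)"
      using abs_reward_le[OF assms] integrable_reward[OF assms]
        M.integrable_PiM_component[OF integrable_abs_price, of t]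
      by (intro integral_mono) (auto simp: K_def)
    also have "\<dots> = \<beta> ^ t * ((\<integral>p. \<bar>p\<bar> \<partial>M) * x + K)"
      using M.integrable_PiM_component[OF integrable_abs_price, of t] M.integral_PiM_component[of abs t]
      by (simp add: measurable_M_eq_borel P.prob_space)
    finally show ?thesis .
  qed
  have "summable (\<lambda>t. \<beta> ^ t * ((\<integral>p. \<bar>p\<bar> \<partial>M) * x + K))"
    using beta by (intro summable_mult2) simp
  then have summable_norm: "summable (\<lambda>t. \<integral>\<omega>. norm (reward t x \<omega>) \<partial>P)"
    by (rule summable_comparison_test'[where N=0]) (use integral_norm_le in simp)
  show "Vbar policy M C \<beta> x = (\<Sum>t. \<integral>\<omega>. reward t x \<omega> \<partial>P)"
    unfolding Vbar_def reward_def[symmetric]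
    by (rule integral_suminf[OF integrable_reward[OF assms] AE_summable summable_norm])
  show "summable (\<lambda>t. \<integral>\<omega>. reward t x \<omega> \<partial>P)"
    by (rule summable_integral[OF integrable_reward[OF assms] AE_summable summable_norm])
qed

lemma AE_neq: "AE p in M. p \<noteq> a"
  using M_no_atoms M_borel by (intro AE_I[of _ _ "{a}"]) (auto simp: M.emeasure_eq_measure)

lemma AE_no_tie:
  assumes "0 < x0"
  shows "AE \<omega> in P. \<forall>s. target (\<omega> s) \<noteq> x0"
proof -
  have "AE p in M. target p \<noteq> x0"
    using AE_neq[of "critical_price x0"] by (auto elim!: eventually_mono simp: target_eq_iff[OF assms])
  then have "AE \<omega> in P. target (\<omega> s) \<noteq> x0" for s
    by (intro AE_PiM_component) (simp_all add: M_prob)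
  then show ?thesis
    by (simp add: AE_all_countable)
qed

lemma has_real_derivative_expected_reward:
  assumes "0 < x0"
  shows "((\<lambda>x. \<integral>\<omega>. reward t x \<omega> \<partial>P) has_real_derivative (\<integral>\<omega>. reward_deriv t x0 \<omega> \<partial>P)) (at x0)"
proof (rule has_real_derivative_integral
    [where \<delta>="x0/2" and G="\<lambda>\<omega>. \<beta> ^ t * (2 * \<bar>\<omega> t\<bar> + (\<bar>c 0\<bar> + \<bar>c (2*x0)\<bar>))"])
  have ball: "0 \<le> x \<and> x \<le> 2 * x0" if "x \<in> ball x0 (x0/2)" for x
    using that by (auto simp: dist_real_def abs_if split: if_split_asm)
  show "integrable P (reward t x)" if "x \<in> ball x0 (x0/2)" for x
    using ball[OF that] by (intro integrable_reward) simp
  show "integrable P (\<lambda>\<omega>. \<beta> ^ t * (2 * \<bar>\<omega> t\<bar> + (\<bar>c 0\<bar> + \<bar>c (2*x0)\<bar>)))"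
    using M.integrable_PiM_component[OF integrable_abs_price, of t] by auto
  show "AE \<omega> in P. \<bar>reward t x \<omega> - reward t x0 \<omega>\<bar>
      \<le> \<beta> ^ t * (2 * \<bar>\<omega> t\<bar> + (\<bar>c 0\<bar> + \<bar>c (2*x0)\<bar>)) * \<bar>x - x0\<bar>" if "x \<in> ball x0 (x0/2)" for x
    using ball[OF that] assms by (intro AE_I2 abs_reward_diff_le) auto
  show "AE \<omega> in P. ((\<lambda>x. reward t x \<omega>) has_real_derivative reward_deriv t x0 \<omega>) (at x0)"
    using AE_no_tie[OF assms] by eventually_elim (simp add: has_real_derivative_reward[OF assms])
qed (use assms in simp_all)

definition hold_prob :: "real \<Rightarrow> real" where
  "hold_prob x0 = measure M {p. x0 < target p}"

definition expected_marginal_payoff :: "real \<Rightarrow> real" where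
  "expected_marginal_payoff x0 = (\<integral>p. marginal_payoff x0 p \<partial>M)"

lemma integrable_marginal_payoff: "integrable M (marginal_payoff x0)"
proof (rule Bochner_Integration.integrable_bound)
  show "integrable M (\<lambda>p. \<bar>p\<bar> + \<bar>c x0\<bar>)"
    using integrable_abs_price by simp
  show "marginal_payoff x0 \<in> borel_measurable M"
    unfolding marginal_payoff_def measurable_M_eq_borel by measurable
  show "AE p in M. norm (marginal_payoff x0 p) \<le> norm (\<bar>p\<bar> + \<bar>c x0\<bar>)"
    by (auto simp: marginal_payoff_def)
qed

lemma abs_expected_marginal_payoff_le:
  "\<bar>expected_marginal_payoff x0\<bar> \<le> (\<integral>p. \<bar>p\<bar> \<partial>M) + \<bar>c x0\<bar>"
proof -
  have "\<bar>expected_marginal_payoff x0\<bar> \<le> (\<integral>p. \<bar>marginal_payoff x0 p\<bar> \<partial>M)"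
    unfolding expected_marginal_payoff_def by (rule integral_abs_bound)
  also have "\<dots> \<le> (\<integral>p. \<bar>p\<bar> + \<bar>c x0\<bar> \<partial>M)"
    using integrable_abs[OF integrable_marginal_payoff] integrable_abs_price
    by (intro integral_mono) (auto simp: marginal_payoff_def)
  also have "\<dots> = (\<integral>p. \<bar>p\<bar> \<partial>M) + \<bar>c x0\<bar>"
    using integrable_abs_price by (simp add: M.prob_space)
  finally show ?thesis .
qed

text \<open>The event of holding up to period t depends only on the first t prices, the marginal payoff
  only on the next one; independence factorises the expectation.\<close>

lemma integral_reward_deriv:
  "(\<integral>\<omega>. reward_deriv t x0 \<omega> \<partial>P) = (\<beta> * hold_prob x0) ^ t * expected_marginal_payoff x0"
proof -
  define F where "F s = (if s < t then indicator {p. x0 < target p} else marginal_payoff x0)" for s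
  have integrable_F: "integrable M (F s)" for s
    using integrable_marginal_payoff M_borel
    by (auto simp: F_def M.emeasure_eq_measure intro!: integrable_real_indicator)
  have "reward_deriv t x0 \<omega> = \<beta> ^ t * (\<Prod>s<Suc t. F s (\<omega> s))" for \<omega>
    by (simp add: reward_deriv_def of_bool_kept_eq_prod F_def)
  then have "(\<integral>\<omega>. reward_deriv t x0 \<omega> \<partial>P) = \<beta> ^ t * (\<integral>\<omega>. (\<Prod>s<Suc t. F s (\<omega> s)) \<partial>P)"
    by (simp del: prod.lessThan_Suc)
  also have "(\<integral>\<omega>. (\<Prod>s<Suc t. F s (\<omega> s)) \<partial>P) = (\<Prod>s<Suc t. \<integral>p. F s p \<partial>M)"
    by (rule M.integral_PiM_prod_components) (simp_all add: integrable_F)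
  also have "(\<Prod>s<Suc t. \<integral>p. F s p \<partial>M) = hold_prob x0 ^ t * expected_marginal_payoff x0"
    by (simp add: F_def hold_prob_def expected_marginal_payoff_def space_M)
  finally show ?thesis
    by (simp add: power_mult_distrib)
qed

lemma Vbar_policy_has_real_derivative:
  assumes "0 < x0"
  shows "(Vbar policy M C \<beta> has_real_derivative
      expected_marginal_payoff x0 / (1 - \<beta> * hold_prob x0)) (at x0)"
proof -
  define S where "S = {x0/2<..<2*x0}"
  define f where "f n x = (\<integral>\<omega>. reward n x \<omega> \<partial>P)" for n x
  define f' where "f' n x = (\<beta> * hold_prob x) ^ n * expected_marginal_payoff x" for n x
  define K where "K = (\<integral>p. \<bar>p\<bar> \<partial>M) + (\<bar>c 0\<bar> + \<bar>c (2*x0)\<bar>)"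
  have "x0 \<in> S" "convex S" "x0 \<in> interior S"
    using assms by (auto simp: S_def)
  have f': "(f n has_field_derivative f' n x) (at x within S)" if "x \<in> S" for n x
    using has_real_derivative_expected_reward[of x n] integral_reward_deriv[of n x] that assms
    unfolding f_def f'_def S_def by (auto intro: has_field_derivative_at_within)
  have f'_bound: "norm (f' n x) \<le> \<beta> ^ n * K" if "x \<in> S" for n x
  proof -
    have "c 0 \<le> c x" "c x \<le> c (2*x0)"
      using that assms c_mono by (auto simp: S_def)
    then have "\<bar>expected_marginal_payoff x\<bar> \<le> K"
      using abs_expected_marginal_payoff_le[of x] by (simp add: K_def)
    moreover have "\<bar>(\<beta> * hold_prob x) ^ n\<bar> \<le> \<beta> ^ n"
      using beta by (auto simp: abs_mult power_abs hold_prob_def intro!: power_mono mult_left_le)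
    ultimately show ?thesis
      by (simp add: f'_def abs_mult mult_mono)
  qed
  have uniform: "uniformly_convergent_on S (\<lambda>n x. \<Sum>i<n. f' i x)"
    by (rule Weierstrass_m_test'[OF f'_bound]) (use beta in \<open>auto intro: summable_mult2\<close>)
  have "summable (\<lambda>n. f n x0)"
    unfolding f_def using Vbar_policy_eq_suminf(2)[of x0] assms by simp
  with uniform have "((\<lambda>x. \<Sum>n. f n x) has_field_derivative (\<Sum>n. f' n x0)) (at x0)"
    by (intro has_field_derivative_series'(2)[OF \<open>convex S\<close> f' _ \<open>x0 \<in> S\<close> _ \<open>x0 \<in> interior S\<close>])
  moreover have "eventually (\<lambda>x. Vbar policy M C \<beta> x = (\<Sum>n. f n x)) (nhds x0)"
    using eventually_nhds_in_open[of "{0<..}" x0] assms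
    by (auto elim!: eventually_mono simp: f_def Vbar_policy_eq_suminf(1))
  moreover have "0 \<le> \<beta> * hold_prob x0" "\<beta> * hold_prob x0 < 1"
    using beta M.prob_le_1 le_less_trans[OF mult_left_le[of "hold_prob x0" \<beta>]]
    by (simp_all add: hold_prob_def)
  then have "(\<lambda>n. (\<beta> * hold_prob x0) ^ n) sums (1 / (1 - \<beta> * hold_prob x0))"
    by (intro geometric_sums) simp
  then have "(\<lambda>n. f' n x0) sums (1 / (1 - \<beta> * hold_prob x0) * expected_marginal_payoff x0)"
    unfolding f'_def by (rule sums_mult2)
  ultimately show ?thesis
    by (simp add: DERIV_cong_ev sums_iff)
qed

lemma measure_atMost_eq_lessThan: "measure M {..a} = measure M {..<a}"
proof -
  have "{a} \<in> null_sets M"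
    using M_no_atoms M_borel by (intro null_setsI) (simp_all add: M.emeasure_eq_measure)
  then have "measure M ({..<a} \<union> {a}) = measure M {..<a}"
    using M_borel by (intro measure_Un_null_set) simp_all
  then show ?thesis
    by (metis ivl_disj_un_singleton(2))
qed

lemma Vbar_policy_has_real_derivative_pstar:
  assumes "0 < x"
  shows "(Vbar policy M C \<beta> has_real_derivative
      ((\<integral>p. p * indicator {pstar policy x<..} p \<partial>M) - measure M {..pstar policy x} * c x)
      / (1 - \<beta> * measure M {..pstar policy x})) (at x)"
proof -
  define a where "a = pstar policy x"
  have hold_iff: "x < target p \<longleftrightarrow> p < a" for p
    using less_target_iff[OF assms] pstar_policy[OF assms] by (simp add: a_def)
  then have hold_prob: "hold_prob x = measure M {..a}"
    by (simp add: hold_prob_def measure_atMost_eq_lessThan lessThan_def)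
  have "AE p in M. marginal_payoff x p = p * indicator {a<..} p - c x * indicator {..a} p"
    using AE_neq[of a] by eventually_elim (auto simp: marginal_payoff_def hold_iff indicator_def)
  then have "expected_marginal_payoff x = (\<integral>p. p * indicator {a<..} p - c x * indicator {..a} p \<partial>M)"
    unfolding expected_marginal_payoff_def
    by (intro integral_cong_AE borel_measurable_integrable[OF integrable_marginal_payoff])
      (simp_all add: measurable_M_eq_borel)
  also have "\<dots> = (\<integral>p. p * indicator {a<..} p \<partial>M) - measure M {..a} * c x"
    using M_mean M_borel
    by (simp add: integrable_real_mult_indicator M.emeasure_eq_measure space_M mult.commute)
  finally show ?thesis
    using Vbar_policy_has_real_derivative[OF assms] hold_prob by (simp add: a_def)
qed

end

lemma threshold_policy_discounted_hold_value:
  fixes \<phi> :: "real \<Rightarrow> real"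
  assumes beta: "0 < \<beta>" "\<beta> < 1"
    and C_mono: "mono_on {0..} C"
    and C_deriv: "\<forall>x\<ge>0. (C has_real_derivative c x) (at x within {0..})"
    and c_strict_mono: "\<And>a b. 0 \<le> a \<Longrightarrow> a < b \<Longrightarrow> c a < c b"
    and c_cont: "continuous_on {0..} c"
    and c_lim: "filterlim c at_top at_top"
    and M_prob: "prob_space M"
    and M_borel: "sets M = sets borel"
    and M_mean: "integrable M (\<lambda>p. p)"
    and M_no_atoms: "\<forall>a. measure M {a} = 0"
    and \<phi>_cont: "continuous_on UNIV \<phi>"
    and \<phi>_antimono: "antimono \<phi>"
    and \<phi>_nonneg: "\<And>p. 0 \<le> \<phi> p"
    and \<phi>_vanishes: "\<And>p. B \<le> p \<Longrightarrow> \<phi> p = 0"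
  shows "threshold_policy C c M \<beta> (\<lambda>p. \<beta> * \<phi> p - (1 - \<beta>) * p)"
proof (rule threshold_policy.intro)
  show "continuous_on UNIV (\<lambda>p. \<beta> * \<phi> p - (1 - \<beta>) * p)"
    using \<phi>_cont by (intro continuous_intros)
  show "\<beta> * \<phi> b - (1 - \<beta>) * b < \<beta> * \<phi> a - (1 - \<beta>) * a" if "a < b" for a b
  proof -
    have "\<beta> * \<phi> b \<le> \<beta> * \<phi> a"
      using that beta antimonoD[OF \<phi>_antimono, of a b] by (intro mult_left_mono) auto
    moreover have "(1 - \<beta>) * a < (1 - \<beta>) * b"
      using that beta by simp
    ultimately show ?thesis
      by linarith
  qed
  show "\<exists>p. \<beta> * \<phi> p - (1 - \<beta>) * p \<le> z" for z
  proof -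
    define p where "p = max B (\<bar>z\<bar> / (1 - \<beta>))"
    have "B \<le> p" "\<bar>z\<bar> / (1 - \<beta>) \<le> p"
      by (simp_all add: p_def)
    then have "- z \<le> (1 - \<beta>) * p"
      using beta abs_ge_minus_self[of z] by (simp add: pos_divide_le_eq mult.commute)
    moreover have "\<phi> p = 0"
      using \<phi>_vanishes[OF \<open>B \<le> p\<close>] .
    ultimately have "\<beta> * \<phi> p - (1 - \<beta>) * p \<le> z"
      by simp
    then show ?thesis ..
  qed
  show "\<exists>p. z \<le> \<beta> * \<phi> p - (1 - \<beta>) * p" for z
  proof
    have "0 \<le> \<beta> * \<phi> (- \<bar>z\<bar> / (1 - \<beta>))"
      using beta \<phi>_nonneg by simp
    then show "z \<le> \<beta> * \<phi> (- \<bar>z\<bar> / (1 - \<beta>)) - (1 - \<beta>) * (- \<bar>z\<bar> / (1 - \<beta>))"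
      using beta by simp
  qed
qed (fact assms)+

lemma sum_excess_vanishes:
  fixes ps :: "nat \<Rightarrow> real"
  assumes "(\<Sum>i\<in>I. \<bar>ps i\<bar>) \<le> p" and "finite I"
  shows "(\<Sum>i\<in>I. max (ps i - p) 0) = 0"
proof (rule sum.neutral, intro ballI)
  fix i assume "i \<in> I"
  then have "ps i \<le> (\<Sum>i\<in>I. \<bar>ps i\<bar>)"
    using member_le_sum[of i I "\<lambda>i. \<bar>ps i\<bar>"] \<open>finite I\<close> abs_ge_self[of "ps i"] by simp
  then show "max (ps i - p) 0 = 0"
    using assms(1) by simp
qed

theorem lemma4:
  fixes \<beta> x1 :: real and C c :: "real \<Rightarrow> real" and M :: "real measure"
    and N :: nat and ps :: "nat \<Rightarrow> real"
  assumes beta: "0 < \<beta>" "\<beta> < 1"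
    and x1: "0 \<le> x1"
    and C_nonneg: "\<forall>x\<ge>0. 0 \<le> C x"
    and C_incr: "mono_on {0..} C"
    and C_strict_convex: "strict_convex_on {0..} C"
    and C_deriv: "\<forall>x\<ge>0. (C has_real_derivative c x) (at x within {0..})"
    and c_cont: "continuous_on {0..} c"
    and c_lim: "filterlim c at_top at_top"
    and M_prob: "prob_space M"
    and M_borel: "sets M = sets borel"
    and M_nonneg: "AE p in M. 0 \<le> p"
    and M_mean: "integrable M (\<lambda>p. p)"
    and M_no_atoms: "\<forall>a. measure M {a} = 0"
    and N_pos: "0 < N"
    and samples_nonneg: "\<forall>i\<in>{1..N}. 0 \<le> ps i"
  shows "\<forall>x\<in>{0<..<x1}.
     (Vbar (yS c \<beta> N ps) M C \<beta> has_real_derivative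
        ((\<integral>p. p * indicator {pstar (yS c \<beta> N ps) x<..} p \<partial>M)
           - measure M {..pstar (yS c \<beta> N ps) x} * c x)
        / (1 - \<beta> * measure M {..pstar (yS c \<beta> N ps) x})) (at x)
   \<and> (Vbar (yM c \<beta> N ps) M C \<beta> has_real_derivative
        ((\<integral>p. p * indicator {pstar (yM c \<beta> N ps) x<..} p \<partial>M)
           - measure M {..pstar (yM c \<beta> N ps) x} * c x)
        / (1 - \<beta> * measure M {..pstar (yM c \<beta> N ps) x})) (at x)"
proof -
  note policy_instance = threshold_policy_discounted_hold_value[OF beta C_incr C_deriv
      strict_convex_on_derivative_strict_mono[OF C_strict_convex C_deriv c_cont]
      c_cont c_lim M_prob M_borel M_mean M_no_atoms]
  define \<phi>S where "\<phi>S p = 1 / real N * (\<Sum>i=1..N. max (ps i - p) 0)" for p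
  define \<phi>M where "\<phi>M p = max (muN N ps - p) 0" for p
  have S: "threshold_policy C c M \<beta> (\<lambda>p. \<beta> * \<phi>S p - (1 - \<beta>) * p)"
  proof (rule policy_instance[where B="\<Sum>i=1..N. \<bar>ps i\<bar>"])
    show "continuous_on UNIV \<phi>S"
      unfolding \<phi>S_def by (intro continuous_intros)
    show "\<phi>S p = 0" if "(\<Sum>i=1..N. \<bar>ps i\<bar>) \<le> p" for p
      using sum_excess_vanishes[OF that] by (simp add: \<phi>S_def)
  qed (auto simp: \<phi>S_def antimono_def intro!: divide_right_mono divide_nonneg_nonneg sum_mono sum_nonneg)
  have M: "threshold_policy C c M \<beta> (\<lambda>p. \<beta> * \<phi>M p - (1 - \<beta>) * p)"
    by (rule policy_instance[where B="muN N ps"])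
      (auto simp: \<phi>M_def antimono_def intro!: continuous_intros)
  have "yS c \<beta> N ps = threshold_policy.policy c (\<lambda>p. \<beta> * \<phi>S p - (1 - \<beta>) * p)"
    unfolding threshold_policy.policy_def[OF S, abs_def] by (intro ext) (simp add: yS_def \<phi>S_def)
  moreover have "yM c \<beta> N ps = threshold_policy.policy c (\<lambda>p. \<beta> * \<phi>M p - (1 - \<beta>) * p)"
    unfolding threshold_policy.policy_def[OF M, abs_def] by (intro ext) (simp add: yM_def \<phi>M_def)
  ultimately show ?thesis
    using threshold_policy.Vbar_policy_has_real_derivative_pstar[OF S]
      threshold_policy.Vbar_policy_has_real_derivative_pstar[OF M] by simp
qed

end
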